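(* Let $G$ and $G'$ be simple directed graphs on $[n]$ with $E(G)\subseteq E(G')$ (i.e., $i\to j$ in $G$ implies $i\to j$ in $G'$), and let $W=W(G,\varepsilon,\delta)$ and $W'=W(G',\varepsilon,\delta)$ be CTLNs with the same legal parameters. Then $\lambda_{\max}(I-W)\ge\lambda_{\max}(I-W')$.
   Context: Legal parameters: $\delta>0$, $0<\varepsilon<\frac{\delta}{\delta+1}$. $W(G,\varepsilon,\delta)$ is the $n\times n$ matrix with $W_{ii}=0$, $W_{ij}=-1+\varepsilon$ if $j\to i$ in $G$, $W_{ij}=-1-\delta$ if $i\ne j$ and $j\not\to i$. $I-W$ has strictly positive entries, and $\lambda_{\max}$ denotes its Perron–Frobenius eigenvalue. *)

theory Defs
  imports "Jordan_Normal_Form.Spectral_Radius"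
begin

text \<open>Vertices of a graph on [n] are represented as 0,...,n-1. A directed graph is an
edge relation G :: nat => nat => bool, where G j i means the edge j -> i.\<close>

definition simple_digraph :: "nat \<Rightarrow> (nat \<Rightarrow> nat \<Rightarrow> bool) \<Rightarrow> bool" where
  "simple_digraph n G \<longleftrightarrow> (\<forall>i<n. \<not> G i i)"

definition legal_params :: "real \<Rightarrow> real \<Rightarrow> bool" where
  "legal_params \<epsilon> \<delta> \<longleftrightarrow> \<delta> > 0 \<and> 0 < \<epsilon> \<and> \<epsilon> < \<delta> / (\<delta> + 1)"

definition ctln_W :: "nat \<Rightarrow> (nat \<Rightarrow> nat \<Rightarrow> bool) \<Rightarrow> real \<Rightarrow> real \<Rightarrow> real mat" where
  "ctln_W n G \<epsilon> \<delta> = mat n n (\<lambda>(i, j).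
     if i = j then 0 else if G j i then -1 + \<epsilon> else -1 - \<delta>)"

text \<open>Perron-Frobenius eigenvalue of a (positive) real square matrix: its spectral radius.\<close>
definition lambda_max :: "real mat \<Rightarrow> real" where
  "lambda_max A = spectral_radius (map_mat complex_of_real A)"

end

theory Submission
  imports Defs
begin

text \<open>Adding edges to G only lowers entries of I - W: an edge j \<rightarrow> i turns the entry
  1 + \<delta> into 1 - \<epsilon>, which is still positive since \<epsilon> < 1. The claim is therefore the
  monotonicity of the spectral radius: \<bar>B\<bar> \<le> A entrywise implies \<rho>(B) \<le> \<rho>(A).
  If B v = \<lambda> v, then u = \<bar>v\<bar> satisfies A u \<ge> \<bar>\<lambda>\<bar> u, so for 0 < s < \<bar>\<lambda>\<bar> the vectors
  (A/s)^k u grow exponentially; but for s > \<rho>(A) the powers of A/s are bounded, by the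
  Jordan normal form.\<close>

lemma mult_mat_vec_nth_sum:
  assumes "A \<in> carrier_mat nr n" "v \<in> carrier_vec n" "i < nr"
  shows "(A *\<^sub>v v) $ i = (\<Sum>j = 0..<n. A $$ (i,j) * v $ j)"
  using assms by (auto simp: scalar_prod_def intro!: sum.cong)

lemma smult_mat_mult_mat_vec:
  assumes "A \<in> carrier_mat nr n" "v \<in> carrier_vec n"
  shows "(a \<cdot>\<^sub>m A) *\<^sub>v v = (a :: 'a :: comm_semiring_0) \<cdot>\<^sub>v (A *\<^sub>v v)"
  using assms by (intro eq_vecI) auto

lemma pow_mat_Suc_left:
  assumes A: "A \<in> carrier_mat n n"
  shows "A ^\<^sub>m Suc k = A * A ^\<^sub>m k"
proof (induction k)
  case 0
  show ?case using A by simp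
next
  case (Suc k)
  have "A ^\<^sub>m Suc (Suc k) = (A * A ^\<^sub>m k) * A"
    by (simp flip: Suc)
  also have "\<dots> = A * A ^\<^sub>m Suc k"
    using A by (simp add: assoc_mult_mat[of _ n n _ n])
  finally show ?case .
qed

lemma spectral_radius_smult_ge:
  assumes M: "M \<in> carrier_mat n n" and n: "n > 0"
  shows "norm a * spectral_radius M \<le> spectral_radius (a \<cdot>\<^sub>m M)"
proof -
  obtain ev where ev: "ev \<in> spectrum M" "spectral_radius M = norm ev"
    using spectral_radius_mem_max(1)[OF M n] by auto
  then obtain w where "eigenvector M w ev"
    unfolding spectrum_def eigenvalue_def by auto
  then have "eigenvector (a \<cdot>\<^sub>m M) w (a * ev)"
    using M by (auto simp: eigenvector_def smult_mat_mult_mat_vec smult_smult_assoc)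
  then have "norm (a * ev) \<in> norm ` spectrum (a \<cdot>\<^sub>m M)"
    unfolding spectrum_def eigenvalue_def by auto
  from spectral_radius_mem_max(2)[OF _ n this] M ev(2)
  show ?thesis by (simp add: norm_mult)
qed

lemma bounded_powers_if_spectral_radius_less_1:
  fixes A :: "real mat"
  assumes A: "A \<in> carrier_mat n n"
    and sr: "spectral_radius (map_mat of_real A) < 1"
  shows "\<exists>c. \<forall>k. norm_bound (A ^\<^sub>m k) c"
proof -
  obtain c where c: "\<And>k. norm_bound (map_mat of_real A ^\<^sub>m k :: complex mat) c"
    using spectral_radius_jnf_norm_bound_less_1_upper_triangular[OF _ sr] A by fastforce
  have "norm_bound (A ^\<^sub>m k) c" for k
  proof (rule norm_boundI)
    fix i j assume "i < dim_row (A ^\<^sub>m k)" "j < dim_col (A ^\<^sub>m k)"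
    then have ij: "i < n" "j < n"
      by (simp_all only: pow_mat_dim_square[OF A])
    then have "cmod ((map_mat of_real (A ^\<^sub>m k) :: complex mat) $$ (i,j)) \<le> c"
      using c[of k] A unfolding of_real_hom.mat_hom_pow[OF A] norm_bound_def by simp
    with ij A show "norm ((A ^\<^sub>m k) $$ (i,j)) \<le> c"
      by simp
  qed
  then show ?thesis by blast
qed

lemma eigenvector_abs_subinvariant:
  fixes A B :: "real mat"
  assumes A: "A \<in> carrier_mat n n" and B: "B \<in> carrier_mat n n"
    and dom: "\<And>i j. i < n \<Longrightarrow> j < n \<Longrightarrow> \<bar>B $$ (i,j)\<bar> \<le> A $$ (i,j)"
    and ev: "eigenvector (map_mat of_real B) v \<mu>"
    and i: "i < n"
  shows "cmod \<mu> * cmod (v $ i) \<le> (A *\<^sub>v vec n (\<lambda>j. cmod (v $ j))) $ i"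
proof -
  have Bc: "map_mat of_real B \<in> carrier_mat n n"
    using B by simp
  have v: "v \<in> carrier_vec n" and Bv: "map_mat of_real B *\<^sub>v v = \<mu> \<cdot>\<^sub>v v"
    using ev B unfolding eigenvector_def by auto
  have "cmod \<mu> * cmod (v $ i) = cmod ((map_mat of_real B *\<^sub>v v) $ i)"
    using Bv v i by (simp add: norm_mult)
  also have "\<dots> = cmod (\<Sum>j = 0..<n. of_real (B $$ (i,j)) * v $ j)"
    unfolding mult_mat_vec_nth_sum[OF Bc v i] using B i by (auto intro!: sum.cong)
  also have "\<dots> \<le> (\<Sum>j = 0..<n. \<bar>B $$ (i,j)\<bar> * cmod (v $ j))"
    by (rule order.trans[OF norm_sum]) (simp add: norm_mult)
  also have "\<dots> \<le> (\<Sum>j = 0..<n. A $$ (i,j) * cmod (v $ j))"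
    using dom i by (intro sum_mono mult_right_mono) auto
  also have "\<dots> = (A *\<^sub>v vec n (\<lambda>j. cmod (v $ j))) $ i"
    unfolding mult_mat_vec_nth_sum[OF A vec_carrier i] by simp
  finally show ?thesis .
qed

lemma pow_mat_mult_vec_ge_power:
  fixes A :: "real mat"
  assumes A: "A \<in> carrier_mat n n" and u: "u \<in> carrier_vec n"
    and nonneg: "\<And>i j. i < n \<Longrightarrow> j < n \<Longrightarrow> 0 \<le> A $$ (i,j)"
    and t: "t \<ge> 0"
    and sub: "\<And>i. i < n \<Longrightarrow> t * u $ i \<le> (A *\<^sub>v u) $ i"
  shows "i < n \<Longrightarrow> t ^ k * u $ i \<le> (A ^\<^sub>m k *\<^sub>v u) $ i"
proof (induction k arbitrary: i)
  case 0
  then show ?case using A u by simp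
next
  case (Suc k)
  have "t ^ Suc k * u $ i = t ^ k * (t * u $ i)"
    by simp
  also have "\<dots> \<le> t ^ k * (A *\<^sub>v u) $ i"
    using sub[OF Suc.prems] t by (simp add: mult_left_mono)
  also have "\<dots> = (\<Sum>j = 0..<n. A $$ (i,j) * (t ^ k * u $ j))"
    unfolding mult_mat_vec_nth_sum[OF A u Suc.prems] by (simp add: sum_distrib_left mult_ac)
  also have "\<dots> \<le> (\<Sum>j = 0..<n. A $$ (i,j) * (A ^\<^sub>m k *\<^sub>v u) $ j)"
    using Suc.IH nonneg Suc.prems by (intro sum_mono mult_left_mono) auto
  also have "\<dots> = (A *\<^sub>v (A ^\<^sub>m k *\<^sub>v u)) $ i"
    unfolding mult_mat_vec_nth_sum[OF A mult_mat_vec_carrier[OF pow_carrier_mat[OF A] u] Suc.prems] ..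
  also have "\<dots> = (A ^\<^sub>m Suc k *\<^sub>v u) $ i"
    using assoc_mult_mat_vec[OF A pow_carrier_mat[OF A] u] by (simp only: pow_mat_Suc_left[OF A])
  finally show ?case .
qed

lemma unbounded_powers_if_subinvariant:
  fixes A :: "real mat"
  assumes A: "A \<in> carrier_mat n n" and u: "u \<in> carrier_vec n"
    and nonneg: "\<And>i j. i < n \<Longrightarrow> j < n \<Longrightarrow> 0 \<le> A $$ (i,j)"
    and u_nonneg: "\<And>j. j < n \<Longrightarrow> 0 \<le> u $ j"
    and i0: "i0 < n" "u $ i0 > 0"
    and t: "t > 1"
    and sub: "\<And>i. i < n \<Longrightarrow> t * u $ i \<le> (A *\<^sub>v u) $ i"
  shows "\<not> (\<exists>c. \<forall>k. norm_bound (A ^\<^sub>m k) c)"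
proof
  assume "\<exists>c. \<forall>k. norm_bound (A ^\<^sub>m k) c"
  then obtain c where c: "\<And>k. norm_bound (A ^\<^sub>m k) c" by blast
  define S where "S = (\<Sum>j = 0..<n. u $ j)"
  have bound: "(A ^\<^sub>m k *\<^sub>v u) $ i0 \<le> c * S" for k
  proof -
    have "(A ^\<^sub>m k *\<^sub>v u) $ i0 = (\<Sum>j = 0..<n. (A ^\<^sub>m k) $$ (i0,j) * u $ j)"
      using A u i0 by (intro mult_mat_vec_nth_sum) auto
    also have "\<dots> \<le> (\<Sum>j = 0..<n. c * u $ j)"
    proof (intro sum_mono)
      fix j assume "j \<in> {0..<n}"
      then have "\<bar>(A ^\<^sub>m k) $$ (i0,j)\<bar> \<le> c" "0 \<le> u $ j"
        using c[of k] A i0 u_nonneg by (auto simp: norm_bound_def)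
      then show "(A ^\<^sub>m k) $$ (i0,j) * u $ j \<le> c * u $ j"
        by (meson abs_ge_self mult_right_mono order_trans)
    qed
    finally show ?thesis by (simp add: S_def sum_distrib_left)
  qed
  obtain k where "c * S / u $ i0 < t ^ k"
    using real_arch_pow[OF t] by blast
  then have "c * S < t ^ k * u $ i0"
    using i0 by (simp add: divide_less_eq)
  also have "\<dots> \<le> (A ^\<^sub>m k *\<^sub>v u) $ i0"
    using pow_mat_mult_vec_ge_power[OF A u nonneg _ sub i0(1)] t by simp
  finally show False using bound[of k] by simp
qed

lemma spectral_radius_ge_if_subinvariant:
  fixes A :: "real mat"
  assumes A: "A \<in> carrier_mat n n" and u: "u \<in> carrier_vec n"
    and nonneg: "\<And>i j. i < n \<Longrightarrow> j < n \<Longrightarrow> 0 \<le> A $$ (i,j)"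
    and u_nonneg: "\<And>j. j < n \<Longrightarrow> 0 \<le> u $ j"
    and i0: "i0 < n" "u $ i0 > 0"
    and sub: "\<And>i. i < n \<Longrightarrow> r * u $ i \<le> (A *\<^sub>v u) $ i"
  shows "r \<le> spectral_radius (map_mat of_real A)"
proof (rule ccontr)
  let ?Ac = "map_mat of_real A :: complex mat"
  assume "\<not> ?thesis"
  then obtain s where s: "spectral_radius ?Ac < s" "s < r"
    using dense by (meson not_le)
  have "0 \<le> spectral_radius ?Ac"
    using spectral_radius_mem_max(1)[of ?Ac n] A i0 by auto
  with s have s_pos: "s > 0" by simp
  define M where "M = (1 / s) \<cdot>\<^sub>m A"
  have M: "M \<in> carrier_mat n n"
    using A by (simp add: M_def)
  have "of_real s \<cdot>\<^sub>m map_mat of_real M = ?Ac"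
    using A s_pos by (intro eq_matI) (auto simp: M_def)
  then have "s * spectral_radius (map_mat of_real M) \<le> spectral_radius ?Ac"
    using spectral_radius_smult_ge[of "map_mat of_real M" n "of_real s"] M i0 s_pos by simp
  with s have "s * spectral_radius (map_mat of_real M) < s * 1"
    by linarith
  then have "spectral_radius (map_mat of_real M) < 1"
    using s_pos mult_less_cancel_left_pos by blast
  then have bounded: "\<exists>c. \<forall>k. norm_bound (M ^\<^sub>m k) c"
    by (rule bounded_powers_if_spectral_radius_less_1[OF M])
  have M_nonneg: "0 \<le> M $$ (i,j)" if "i < n" "j < n" for i j
    using nonneg[OF that] that A s_pos by (simp add: M_def)
  have t: "r / s > 1"
    using s s_pos by simp
  have "r / s * u $ i \<le> (M *\<^sub>v u) $ i" if i: "i < n" for i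
  proof -
    have "(M *\<^sub>v u) $ i = (A *\<^sub>v u) $ i / s"
      using A u i by (simp add: M_def smult_mat_mult_mat_vec[OF A u])
    then show ?thesis
      using sub[OF i] s_pos by (simp add: divide_right_mono)
  qed
  from unbounded_powers_if_subinvariant[OF M u M_nonneg u_nonneg i0 t this] bounded
  show False by blast
qed

lemma spectral_radius_mono:
  fixes A B :: "real mat"
  assumes A: "A \<in> carrier_mat n n" and B: "B \<in> carrier_mat n n"
    and dom: "\<And>i j. i < n \<Longrightarrow> j < n \<Longrightarrow> \<bar>B $$ (i,j)\<bar> \<le> A $$ (i,j)"
  shows "spectral_radius (map_mat of_real B) \<le> spectral_radius (map_mat of_real A)"
proof (cases "n = 0")
  case True
  then have "map_mat of_real B = (map_mat of_real A :: complex mat)"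
    using A B by (intro eq_matI) auto
  then show ?thesis by simp
next
  case False
  let ?Bc = "map_mat of_real B :: complex mat"
  obtain \<mu> v where \<mu>: "cmod \<mu> = spectral_radius ?Bc" and v: "eigenvector ?Bc v \<mu>"
    using spectral_radius_mem_max(1)[of ?Bc n] B False
    unfolding spectrum_def eigenvalue_def by force
  define u where "u = vec n (\<lambda>j. cmod (v $ j))"
  obtain i0 where i0: "i0 < n" "u $ i0 > 0"
  proof -
    have "v \<in> carrier_vec n" "v \<noteq> 0\<^sub>v n"
      using v B by (auto simp: eigenvector_def)
    then obtain i where "i < n" "v $ i \<noteq> 0"
      by (metis eq_vecI carrier_vecD index_zero_vec(1,2))
    then show ?thesis
      using that by (simp add: u_def)
  qed
  have nonneg: "0 \<le> A $$ (i,j)" if "i < n" "j < n" for i j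
    using dom[OF that] by (meson abs_ge_zero order_trans)
  have "cmod \<mu> * u $ i \<le> (A *\<^sub>v u) $ i" if "i < n" for i
    using eigenvector_abs_subinvariant[OF A B dom v that] that by (simp add: u_def)
  from spectral_radius_ge_if_subinvariant[OF A _ nonneg _ i0 this] \<mu>
  show ?thesis by (simp add: u_def)
qed

lemma ctln_I_minus_W_entry:
  assumes "i < n" "j < n"
  shows "(1\<^sub>m n - ctln_W n G \<epsilon> \<delta>) $$ (i,j) =
    (if i = j then 1 else if G j i then 1 - \<epsilon> else 1 + \<delta>)"
  using assms by (simp add: ctln_W_def)

theorem corollary2:
  fixes n :: nat and G G' :: "nat \<Rightarrow> nat \<Rightarrow> bool" and \<epsilon> \<delta> :: real
  assumes "simple_digraph n G" and "simple_digraph n G'"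
    and "\<forall>i<n. \<forall>j<n. G i j \<longrightarrow> G' i j"
    and "legal_params \<epsilon> \<delta>"
  shows "lambda_max (1\<^sub>m n - ctln_W n G \<epsilon> \<delta>) \<ge> lambda_max (1\<^sub>m n - ctln_W n G' \<epsilon> \<delta>)"
proof -
  have \<delta>: "\<delta> > 0" and \<epsilon>: "0 < \<epsilon>" "\<epsilon> < \<delta> / (\<delta> + 1)"
    using assms(4) by (auto simp: legal_params_def)
  moreover have "\<delta> / (\<delta> + 1) < 1"
    using \<delta> by simp
  ultimately have "\<epsilon> < 1"
    by linarith
  show ?thesis
    unfolding lambda_max_def
  proof (rule spectral_radius_mono)
    fix i j assume "i < n" "j < n"
    then show "\<bar>(1\<^sub>m n - ctln_W n G' \<epsilon> \<delta>) $$ (i,j)\<bar> \<le> (1\<^sub>m n - ctln_W n G \<epsilon> \<delta>) $$ (i,j)"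
      using assms(3) \<delta> \<epsilon> \<open>\<epsilon> < 1\<close> by (auto simp: ctln_I_minus_W_entry)
  qed (auto simp: ctln_W_def)
qed

end
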